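(* Let $M=\{a,\bar a,b,\bar b\}^*$ be the free monoid on the four letters $a,\bar a,b,\bar b$, and let $F$ be the free group with free basis $\{a,\bar a,b,\bar b\}$. Equip $F$ with the profinite topology, and equip $M$ with the subspace topology induced by the natural embedding $M\hookrightarrow F$. Let $D_2^{'*}\subseteq M$ be the one-sided Dyck language and $D_2^*\subseteq M$ the two-sided Dyck language on the two pairs $\{a,\bar a\}$, $\{b,\bar b\}$. Then the closure of $D_2^{'*}$ in $M$ equals $D_2^*$.
   Context: The profinite topology on $F$ is the group topology in which the subgroups of finite index of $F$ form a basis of open neighborhoods of $1_F$. The one-sided (restricted) Dyck language $D_2^{'*}$ consists of the words $w\in M$ that can be reduced to the empty word by successively deleting subwords of the form $a\bar a$ or $b\bar b$ (i.e. $a,b$ are opening brackets and $\bar a,\bar b$ the corresponding closing brackets, and the word is correctly bracketed with each opening bracket preceding its closing bracket). The two-sided (unrestricted) Dyck language $D_2^*$ consists of the words $w\in M$ that can be reduced to the empty word by successively deleting subwords of the form $a\bar a$, $\bar a a$, $b\bar b$, or $\bar b b$. *)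

theory Defs
  imports "HOL-Analysis.Analysis" "HOL-Algebra.Coset"
begin

text \<open>The four letters a, abar, b, bbar. The free monoid M is \<open>letter list\<close>.\<close>
datatype letter = A | Abar | B | Bbar

text \<open>Free group F on the free basis {a, abar, b, bbar} (four independent generators):
  elements are freely reduced words over letters with a sign (True = inverse).\<close>
type_synonym gword = "(letter \<times> bool) list"

fun ginv_letter :: "letter \<times> bool \<Rightarrow> letter \<times> bool" where
  "ginv_letter (x, s) = (x, \<not> s)"

fun push :: "letter \<times> bool \<Rightarrow> gword \<Rightarrow> gword" where
  "push x [] = [x]"
| "push x (y # ys) = (if y = ginv_letter x then ys else x # y # ys)"

definition reduce :: "gword \<Rightarrow> gword" where
  "reduce w = foldr push w []"

definition reduced :: "gword \<Rightarrow> bool" where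
  "reduced w \<longleftrightarrow> (\<forall>i. Suc i < length w \<longrightarrow> w ! Suc i \<noteq> ginv_letter (w ! i))"

definition free_group_F :: "gword monoid" where
  "free_group_F = \<lparr>carrier = {w. reduced w}, mult = (\<lambda>u v. reduce (u @ v)), one = []\<rparr>"

definition fin_index_subgroups :: "gword set set" where
  "fin_index_subgroups = {H. subgroup H free_group_F \<and> finite (rcosets\<^bsub>free_group_F\<^esub> H)}"

definition profinite_F :: "gword topology" where
  "profinite_F = topology_generated_by
     {x <#\<^bsub>free_group_F\<^esub> H | x H. x \<in> carrier free_group_F \<and> H \<in> fin_index_subgroups}"

definition emb :: "letter list \<Rightarrow> gword" where
  "emb w = map (\<lambda>x. (x, False)) w"

text \<open>Topology on M: subspace topology induced via the embedding (M identified with emb ` UNIV).\<close>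
definition topM :: "gword topology" where
  "topM = subtopology profinite_F (range emb)"

definition del_one_sided :: "(letter list \<times> letter list) set" where
  "del_one_sided = {(u @ [x, y] @ v, u @ v) | u v x y. (x, y) \<in> {(A, Abar), (B, Bbar)}}"

definition del_two_sided :: "(letter list \<times> letter list) set" where
  "del_two_sided = {(u @ [x, y] @ v, u @ v) | u v x y.
      (x, y) \<in> {(A, Abar), (Abar, A), (B, Bbar), (Bbar, B)}}"

definition dyck_one_sided :: "letter list set" where
  "dyck_one_sided = {w. (w, []) \<in> del_one_sided\<^sup>*}"

definition dyck_two_sided :: "letter list set" where
  "dyck_two_sided = {w. (w, []) \<in> del_two_sided\<^sup>*}"

end

(*
  A point x of a group lies in the profinite closure of a set S exactly when every homomorphism
  h to a finite group takes the value h x on S: one direction uses the kernel of h, the other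
  the action of the group on the cosets of a subgroup of finite index.

  If w is not a two-sided Dyck word, its image in the free group on a, b (reading abar as the
  inverse of a and bbar as the inverse of b) is a non-empty reduced word u. Free groups are
  residually finite: letting every letter of u move one step along the positions 0, ..., |u|
  defines permutations under which u sends |u| to 0, whereas every two-sided Dyck word acts
  trivially. So w is not in the closure.

  Conversely, a two-sided Dyck word is generated by S -> x S xbar S. If h maps into a finite
  group of order N and m = N - 1, then h identifies abar u a with (a^m u^m abar^m)^m, which is a
  one-sided Dyck word when u is; by induction every two-sided Dyck word has the image of a
  one-sided one.
*)
theory Submission
  imports Defs "HOL-Algebra.Bij" "HOL-Algebra.Left_Coset" "HOL-Algebra.Multiplicative_Group"
begin

section \<open>The profinite topology of a group\<close>

definition finite_index_subgroups :: "('a, 'b) monoid_scheme \<Rightarrow> 'a set set" where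
  "finite_index_subgroups G = {K. subgroup K G \<and> finite (rcosets\<^bsub>G\<^esub> K)}"

definition profinite_topology :: "('a, 'b) monoid_scheme \<Rightarrow> 'a topology" where
  "profinite_topology G = topology_generated_by
     {x <#\<^bsub>G\<^esub> K | x K. x \<in> carrier G \<and> K \<in> finite_index_subgroups G}"

lemma profinite_F_eq: "profinite_F = profinite_topology free_group_F"
  unfolding profinite_F_def profinite_topology_def fin_index_subgroups_def finite_index_subgroups_def ..

lemma finite_carrier_BijGroup:
  assumes "finite S"
  shows "finite (carrier (BijGroup S))"
proof (rule finite_subset)
  show "carrier (BijGroup S) \<subseteq> S \<rightarrow>\<^sub>E S"
    by (auto simp: BijGroup_def Bij_def bij_betw_def PiE_def extensional_def)
  show "finite (S \<rightarrow>\<^sub>E S)"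
    using assms by (simp add: finite_PiE)
qed

context group
begin

lemma finite_index_subgroups_Int:
  assumes "K1 \<in> finite_index_subgroups G" and "K2 \<in> finite_index_subgroups G"
  shows "K1 \<inter> K2 \<in> finite_index_subgroups G"
proof -
  have K: "subgroup K1 G" "subgroup K2 G" and fin: "finite (rcosets K1)" "finite (rcosets K2)"
    using assms by (auto simp: finite_index_subgroups_def)
  have "(K1 \<inter> K2) #> g = (K1 #> g) \<inter> (K2 #> g)" if g: "g \<in> carrier G" for g
  proof
    show "(K1 #> g) \<inter> (K2 #> g) \<subseteq> (K1 \<inter> K2) #> g"
    proof
      fix y assume "y \<in> (K1 #> g) \<inter> (K2 #> g)"
      then obtain k1 k2 where k: "k1 \<in> K1" "k2 \<in> K2" "y = k1 \<otimes> g" "y = k2 \<otimes> g"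
        by (auto simp: r_coset_def)
      moreover have "k1 \<in> carrier G" "k2 \<in> carrier G"
        using k(1,2) K[THEN subgroup.subset] by blast+
      ultimately show "y \<in> (K1 \<inter> K2) #> g"
        using right_cancel[OF g] by (auto simp: r_coset_def)
    qed
  qed (auto simp: r_coset_def)
  then have "rcosets (K1 \<inter> K2) \<subseteq> (\<lambda>(C1, C2). C1 \<inter> C2) ` ((rcosets K1) \<times> (rcosets K2))"
    by (auto simp: RCOSETS_def)
  moreover have "finite ((\<lambda>(C1, C2). C1 \<inter> C2) ` ((rcosets K1) \<times> (rcosets K2)))"
    using fin by blast
  ultimately show ?thesis
    using subgroups_Inter_pair[OF K] finite_subset by (auto simp: finite_index_subgroups_def)
qed

lemma topspace_profinite_topology: "topspace (profinite_topology G) = carrier G"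
proof -
  have "carrier G \<in> finite_index_subgroups G"
    using coset_join2[OF _ subgroup_self] subgroup_self
    by (auto simp: finite_index_subgroups_def RCOSETS_def intro: finite_subset[of _ "{carrier G}"])
  moreover have "x \<in> x <# carrier G" if "x \<in> carrier G" for x
    using lcos_self[OF that subgroup_self] .
  moreover have "x <# K \<subseteq> carrier G" if "x \<in> carrier G" "K \<in> finite_index_subgroups G" for x K
    using that by (intro l_coset_subset_G subgroup.subset) (auto simp: finite_index_subgroups_def)
  ultimately show ?thesis
    unfolding profinite_topology_def topology_generated_by_topspace by blast
qed

lemma openin_profinite_coset:
  "x \<in> carrier G \<Longrightarrow> K \<in> finite_index_subgroups G \<Longrightarrow> openin (profinite_topology G) (x <# K)"
  unfolding profinite_topology_def by (rule topology_generated_by_Basis) blast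

lemma profinite_open_contains_coset:
  assumes "openin (profinite_topology G) U" and "x \<in> U"
  shows "\<exists>K \<in> finite_index_subgroups G. x <# K \<subseteq> U"
  using assms(1)[unfolded profinite_topology_def openin_topology_generated_by_iff] assms(2)
proof (induction arbitrary: x rule: generate_topology_on.induct)
  case (Int U V)
  then obtain K1 K2 where "K1 \<in> finite_index_subgroups G" "x <# K1 \<subseteq> U"
    and "K2 \<in> finite_index_subgroups G" "x <# K2 \<subseteq> V"
    by blast
  then show ?case
    by (intro bexI[of _ "K1 \<inter> K2"] finite_index_subgroups_Int) (auto simp: l_coset_def)
next
  case UN
  then show ?case
    by (meson UnionE Union_upper subset_trans)
next
  case (Basis C)
  then obtain y K where "C = y <# K" "y \<in> carrier G" and K: "K \<in> finite_index_subgroups G"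
    by blast
  then have "C = x <# K"
    using l_repr_independence[of x y K] Basis.prems by (simp add: finite_index_subgroups_def)
  with K show ?case
    by blast
qed auto

lemma in_profinite_closure_iff:
  "x \<in> profinite_topology G closure_of S \<longleftrightarrow>
     x \<in> carrier G \<and> (\<forall>K \<in> finite_index_subgroups G. S \<inter> (x <# K) \<noteq> {})"
proof
  assume x: "x \<in> profinite_topology G closure_of S"
  then have "x \<in> carrier G"
    by (simp add: closure_of_def topspace_profinite_topology)
  moreover have "S \<inter> (x <# K) \<noteq> {}" if K: "K \<in> finite_index_subgroups G" for K
  proof -
    have "x \<in> x <# K"
      using \<open>x \<in> carrier G\<close> K lcos_self by (simp add: finite_index_subgroups_def)
    then show ?thesis
      using x openin_profinite_coset[OF \<open>x \<in> carrier G\<close> K] by (auto simp: closure_of_def)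
  qed
  ultimately show "x \<in> carrier G \<and> (\<forall>K \<in> finite_index_subgroups G. S \<inter> (x <# K) \<noteq> {})"
    by blast
next
  assume x: "x \<in> carrier G \<and> (\<forall>K \<in> finite_index_subgroups G. S \<inter> (x <# K) \<noteq> {})"
  have "\<exists>y \<in> S. y \<in> U" if U: "openin (profinite_topology G) U" "x \<in> U" for U
  proof -
    obtain K where "K \<in> finite_index_subgroups G" "x <# K \<subseteq> U"
      using profinite_open_contains_coset[OF U] by blast
    then show ?thesis
      using x by blast
  qed
  then show "x \<in> profinite_topology G closure_of S"
    using x by (simp add: closure_of_def topspace_profinite_topology)
qed

end

lemma (in group_hom) kernel_in_finite_index_subgroups:
  assumes "finite (carrier H)"
  shows "kernel G H h \<in> finite_index_subgroups G"
proof -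
  have "finite (carrier (G Mod kernel G H h))"
    by (rule inj_on_finite[OF FactGroup_inj_on _ assms]) (auto intro: FactGroup_the_elem_mem)
  then show ?thesis
    by (simp add: finite_index_subgroups_def FactGroup_def subgroup_kernel)
qed

definition coset_action :: "('a, 'b) monoid_scheme \<Rightarrow> 'a set \<Rightarrow> 'a \<Rightarrow> 'a set \<Rightarrow> 'a set" where
  "coset_action G K g = (\<lambda>C \<in> rcosets\<^bsub>G\<^esub> K. C #>\<^bsub>G\<^esub> inv\<^bsub>G\<^esub> g)"

context group
begin

lemma coset_action_hom:
  assumes K: "subgroup K G"
  shows "group_hom G (BijGroup (rcosets K)) (coset_action G K)"
proof -
  have sub: "C \<subseteq> carrier G" if "C \<in> rcosets K" for C
    by (rule subgroup.rcosets_carrier[OF K is_group that])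
  have closed: "C #> g \<in> rcosets K" if C: "C \<in> rcosets K" and g: "g \<in> carrier G" for C g
  proof -
    obtain b where b: "b \<in> carrier G" "C = K #> b"
      using C unfolding RCOSETS_def by blast
    then have "C #> g = K #> (b \<otimes> g)"
      using g K by (simp add: coset_mult_assoc subgroup.subset)
    then show ?thesis
      using b g K by (simp add: rcosetsI subgroup.subset)
  qed
  have Bij: "coset_action G K g \<in> Bij (rcosets K)" if g: "g \<in> carrier G" for g
  proof -
    have "bij_betw (\<lambda>C. C #> inv g) (rcosets K) (rcosets K)"
      by (rule bij_betw_byWitness[where f' = "\<lambda>C. C #> g"])
         (use g closed sub in \<open>auto simp: coset_mult_assoc\<close>)
    then show ?thesis
      by (simp add: coset_action_def Bij_def)
  qed
  have "coset_action G K (g \<otimes> h) C = compose (rcosets K) (coset_action G K g) (coset_action G K h) C"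
    if "g \<in> carrier G" "h \<in> carrier G" for g h C
    using that closed sub
    by (auto simp: coset_action_def compose_def coset_mult_assoc inv_mult_group)
  with Bij have "coset_action G K \<in> hom G (BijGroup (rcosets K))"
    by (auto simp: hom_def BijGroup_def fun_eq_iff)
  then show ?thesis
    by (simp add: group_hom_def group_hom_axioms_def is_group group_BijGroup)
qed

lemma kernel_coset_action:
  assumes K: "subgroup K G"
  shows "kernel G (BijGroup (rcosets K)) (coset_action G K) \<subseteq> K"
proof
  fix g assume "g \<in> kernel G (BijGroup (rcosets K)) (coset_action G K)"
  then have g: "g \<in> carrier G" and "K #> inv g = K"
    using subgroup.subgroup_in_rcosets[OF K is_group]
    by (auto simp: kernel_def coset_action_def BijGroup_def dest: fun_cong[of _ _ K])
  then have "inv g \<in> K"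
    using rcos_self[OF _ K] by (metis inv_closed)
  then show "g \<in> K"
    using g K by (metis inv_inv subgroup.m_inv_closed)
qed

lemma profinite_closure_hom_image:
  assumes x: "x \<in> profinite_topology G closure_of S"
    and h: "group_hom G H h" and fin: "finite (carrier H)"
  shows "\<exists>s \<in> S. h s = h x"
proof -
  have x_carrier: "x \<in> carrier G"
    and cosets: "\<forall>K \<in> finite_index_subgroups G. S \<inter> (x <# K) \<noteq> {}"
    using x by (simp_all add: in_profinite_closure_iff)
  interpret group_hom G H h by (rule h)
  have "kernel G H h \<in> finite_index_subgroups G"
    using fin by (rule kernel_in_finite_index_subgroups)
  with cosets obtain k where "x \<otimes> k \<in> S" "k \<in> kernel G H h"
    by (auto simp: l_coset_def)
  with x_carrier show ?thesis
    by (auto simp: kernel_def intro!: bexI[of _ "x \<otimes> k"])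
qed

text \<open>HOL cannot quantify over the type of \<open>H\<close>; it is fixed to the type of the permutation groups
  of cosets of \<open>G\<close>, which are the only groups the proof uses.\<close>
lemma in_profinite_closureI:
  assumes x: "x \<in> carrier G" and S: "S \<subseteq> carrier G"
    and images: "\<And>(H :: ('a set \<Rightarrow> 'a set) monoid) h.
      group_hom G H h \<Longrightarrow> finite (carrier H) \<Longrightarrow> \<exists>s \<in> S. h s = h x"
  shows "x \<in> profinite_topology G closure_of S"
  unfolding in_profinite_closure_iff
proof (intro conjI ballI x)
  fix K assume "K \<in> finite_index_subgroups G"
  then have K: "subgroup K G" and fin: "finite (rcosets K)"
    by (auto simp: finite_index_subgroups_def)
  interpret act: group_hom G "BijGroup (rcosets K)" "coset_action G K"
    by (rule coset_action_hom[OF K])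
  obtain s where s: "s \<in> S" "coset_action G K s = coset_action G K x"
    using images[OF coset_action_hom[OF K] finite_carrier_BijGroup[OF fin]] by blast
  with x S have "inv x \<otimes> s \<in> kernel G (BijGroup (rcosets K)) (coset_action G K)"
    by (auto simp: kernel_def act.H.l_inv)
  then have "inv x \<otimes> s \<in> K"
    using kernel_coset_action[OF K] by blast
  moreover have "s = x \<otimes> (inv x \<otimes> s)"
    using x s S by (auto simp: m_assoc[symmetric])
  ultimately show "S \<inter> (x <# K) \<noteq> {}"
    using s by (auto simp: l_coset_def)
qed

end

section \<open>The free group \<open>F\<close> and its residual finiteness\<close>

lemma ginv_letter_ginv_letter [simp]: "ginv_letter (ginv_letter l) = l"
  by (cases l) auto

lemma reduced_Nil [simp]: "reduced []"
  by (simp add: reduced_def)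

lemma reduced_Cons: "reduced (l # w) \<longleftrightarrow> reduced w \<and> (w = [] \<or> hd w \<noteq> ginv_letter l)"
proof
  assume r: "reduced (l # w)"
  have "reduced w"
    unfolding reduced_def
  proof (intro allI impI)
    fix i assume "Suc i < length w"
    then show "w ! Suc i \<noteq> ginv_letter (w ! i)"
      using r[unfolded reduced_def, rule_format, of "Suc i"] by simp
  qed
  moreover have "w = [] \<or> hd w \<noteq> ginv_letter l"
    using r[unfolded reduced_def, rule_format, of 0] by (cases w) auto
  ultimately show "reduced w \<and> (w = [] \<or> hd w \<noteq> ginv_letter l)" by blast
next
  assume h: "reduced w \<and> (w = [] \<or> hd w \<noteq> ginv_letter l)"
  show "reduced (l # w)"
    unfolding reduced_def
  proof (intro allI impI)
    fix i assume i: "Suc i < length (l # w)"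
    show "(l # w) ! Suc i \<noteq> ginv_letter ((l # w) ! i)"
      using h i by (cases i; cases w) (auto simp: reduced_def)
  qed
qed

lemma reduced_push: "reduced w \<Longrightarrow> reduced (push l w)"
  by (cases w) (auto simp: reduced_Cons)

lemma reduced_foldr_push: "reduced w \<Longrightarrow> reduced (foldr push u w)"
  by (induction u) (auto intro: reduced_push)

lemma reduced_reduce: "reduced (reduce w)"
  unfolding reduce_def by (rule reduced_foldr_push) simp

lemma reduce_Nil [simp]: "reduce [] = []"
  by (simp add: reduce_def)

lemma reduce_Cons: "reduce (l # w) = push l (reduce w)"
  by (simp add: reduce_def)

lemma reduce_append: "reduce (u @ v) = foldr push u (reduce v)"
  by (simp add: reduce_def)

lemma push_reduced_Cons: "reduced (l # w) \<Longrightarrow> push l w = l # w"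
  by (cases w) (auto simp: reduced_Cons)

lemma reduce_reduced: "reduced w \<Longrightarrow> reduce w = w"
  by (induction w) (auto simp: reduced_Cons reduce_Cons push_reduced_Cons)

lemma push_push_ginv_letter: "reduced w \<Longrightarrow> push l (push (ginv_letter l) w) = w"
  by (cases w) (auto simp: push_reduced_Cons)

lemma foldr_push_push:
  "reduced u \<Longrightarrow> reduced w \<Longrightarrow> foldr push (push l u) w = push l (foldr push u w)"
  by (cases u) (auto simp: push_push_ginv_letter reduced_foldr_push)

lemma foldr_push_reduce: "reduced w \<Longrightarrow> foldr push (reduce u) w = foldr push u w"
  by (induction u) (simp_all add: reduce_Cons foldr_push_push reduced_reduce)

lemma reduce_reduce_left: "reduce (reduce u @ v) = reduce (u @ v)"
  by (simp add: reduce_append foldr_push_reduce reduced_reduce)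

lemma reduce_reduce_right: "reduce (u @ reduce v) = reduce (u @ v)"
  by (simp add: reduce_append reduce_reduced reduced_reduce)

lemma reduce_inverse_append: "reduce (rev (map ginv_letter u) @ u) = []"
proof (induction u rule: rev_induct)
  case (snoc l u)
  have "reduce ((rev (map ginv_letter u) @ u) @ [l]) = [l]"
    using reduce_reduce_left[of "rev (map ginv_letter u) @ u" "[l]"] snoc
    by (simp add: reduce_def)
  then show ?case
    by (simp add: reduce_Cons)
qed simp

lemma carrier_free_group_F: "carrier free_group_F = {w. reduced w}"
  and mult_free_group_F: "u \<otimes>\<^bsub>free_group_F\<^esub> v = reduce (u @ v)"
  and one_free_group_F: "\<one>\<^bsub>free_group_F\<^esub> = []"
  by (simp_all add: free_group_F_def)

lemma group_free_group_F: "group free_group_F"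
proof (rule groupI)
  fix u assume "u \<in> carrier free_group_F"
  then show "\<exists>v \<in> carrier free_group_F. v \<otimes>\<^bsub>free_group_F\<^esub> u = \<one>\<^bsub>free_group_F\<^esub>"
    by (intro bexI[of _ "reduce (rev (map ginv_letter u))"])
       (simp_all add: carrier_free_group_F mult_free_group_F one_free_group_F reduce_reduce_left
          reduce_inverse_append reduced_reduce)
qed (simp_all add: carrier_free_group_F mult_free_group_F one_free_group_F reduced_reduce
       reduce_reduced reduce_reduce_left reduce_reduce_right)

lemma emb_in_carrier: "emb w \<in> carrier free_group_F"
  by (simp add: carrier_free_group_F reduced_def emb_def)

lemma emb_append: "emb (u @ v) = emb u \<otimes>\<^bsub>free_group_F\<^esub> emb v"
  using emb_in_carrier[of "u @ v"]
  by (simp add: mult_free_group_F carrier_free_group_F reduce_reduced emb_def)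

fun free_lift :: "('b, 'c) monoid_scheme \<Rightarrow> (letter \<Rightarrow> 'b) \<Rightarrow> gword \<Rightarrow> 'b" where
  "free_lift H f [] = \<one>\<^bsub>H\<^esub>"
| "free_lift H f ((x, s) # w) = (if s then inv\<^bsub>H\<^esub> (f x) else f x) \<otimes>\<^bsub>H\<^esub> free_lift H f w"

context group
begin

context
  fixes f :: "letter \<Rightarrow> 'a"
  assumes f_closed [simp]: "\<And>x. f x \<in> carrier G"
begin

lemma free_lift_closed [simp]: "free_lift G f w \<in> carrier G"
  by (induction w) auto

lemma free_lift_append: "free_lift G f (u @ v) = free_lift G f u \<otimes> free_lift G f v"
  by (induction u) (auto simp: m_assoc)

lemma free_lift_push: "free_lift G f (push l w) = free_lift G f (l # w)"
  by (cases w; cases l) (auto simp: m_assoc[symmetric])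

lemma free_lift_reduce: "free_lift G f (reduce w) = free_lift G f w"
proof (induction w)
  case (Cons l w)
  then show ?case
    by (cases l) (simp add: reduce_Cons free_lift_push)
qed simp

lemma free_lift_group_hom: "group_hom free_group_F G (free_lift G f)"
  by (auto simp: group_hom_def group_hom_axioms_def hom_def group_free_group_F is_group
      mult_free_group_F free_lift_reduce free_lift_append)

end

end

lemma Bij_extension:
  assumes S: "finite S" and f: "bij_betw f D E" and "D \<subseteq> S" "E \<subseteq> S"
  shows "\<exists>p \<in> Bij S. \<forall>x \<in> D. p x = f x"
proof -
  have "finite D" "finite E"
    using finite_subset[OF assms(3) S] finite_subset[OF assms(4) S] .
  moreover have "card D = card E"
    using f by (rule bij_betw_same_card)
  ultimately have "card (S - D) = card (S - E)"
    using assms(3,4) by (simp add: card_Diff_subset)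
  then obtain g where g: "bij_betw g (S - D) (S - E)"
    using finite_same_card_bij[OF finite_Diff[OF S] finite_Diff[OF S]] by blast
  let ?p = "\<lambda>x. if x \<in> D then f x else g x"
  have "bij_betw ?p (D \<union> (S - D)) (E \<union> (S - E))"
  proof (rule bij_betw_combine)
    show "bij_betw ?p D E"
      using f by (rule bij_betw_cong[THEN iffD1, rotated]) simp
    show "bij_betw ?p (S - D) (S - E)"
      using g by (rule bij_betw_cong[THEN iffD1, rotated]) simp
  qed auto
  then have "bij_betw ?p S S"
    using assms(3,4) by (simp add: Un_absorb1)
  then show ?thesis
    by (intro bexI[of _ "restrict ?p S"]) (use assms(3) in \<open>auto simp: Bij_def\<close>)
qed

text \<open>The prescribed values of \<open>\<sigma>\<close> are consistent exactly because \<open>u\<close> is reduced.\<close>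
lemma reduced_path_Bij:
  assumes "reduced u"
  shows "\<exists>\<sigma> \<in> Bij {0..length u}. \<forall>k < length u.
    (u ! k = (x, False) \<longrightarrow> \<sigma> (Suc k) = k) \<and> (u ! k = (x, True) \<longrightarrow> \<sigma> k = Suc k)"
proof -
  define I where "I s = {k. k < length u \<and> u ! k = (x, s)}" for s
  have adjacent: "u ! Suc k \<noteq> ginv_letter (u ! k)" if "Suc k < length u" for k
    using assms that by (simp add: reduced_def)
  have disjoint: "Suc ` I False \<inter> I True = {}" "I False \<inter> Suc ` I True = {}"
    using adjacent by (fastforce simp: I_def)+
  define f where "f k = (if k \<in> Suc ` I False then k - 1 else Suc k)" for k
  have f: "bij_betw f (Suc ` I False \<union> I True) (I False \<union> Suc ` I True)"
  proof (rule bij_betw_combine)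
    show "bij_betw f (Suc ` I False) (I False)"
      by (rule bij_betw_byWitness[where f' = Suc]) (auto simp: f_def)
    have "bij_betw f (I True) (Suc ` I True) = bij_betw Suc (I True) (Suc ` I True)"
      by (rule bij_betw_cong) (use disjoint(1) in \<open>auto simp: f_def\<close>)
    then show "bij_betw f (I True) (Suc ` I True)"
      by (simp add: bij_betw_def)
  qed (fact disjoint(2))
  have "Suc ` I False \<union> I True \<subseteq> {0..length u}" "I False \<union> Suc ` I True \<subseteq> {0..length u}"
    by (auto simp: I_def)
  then obtain \<sigma> where \<sigma>: "\<sigma> \<in> Bij {0..length u}" "\<forall>k \<in> Suc ` I False \<union> I True. \<sigma> k = f k"
    using Bij_extension[OF finite_atLeastAtMost f] by blast
  have "\<sigma> (Suc k) = k" if "k \<in> I False" for k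
    using that \<sigma>(2) by (simp add: f_def)
  moreover have "\<sigma> k = Suc k" if "k \<in> I True" for k
    using that \<sigma>(2) disjoint(1) by (auto simp: f_def)
  ultimately show ?thesis
    using \<sigma>(1) by (auto simp: I_def)
qed

lemma BijGroup_mult_apply:
  "f \<in> carrier (BijGroup S) \<Longrightarrow> g \<in> carrier (BijGroup S) \<Longrightarrow> x \<in> S \<Longrightarrow>
    (f \<otimes>\<^bsub>BijGroup S\<^esub> g) x = f (g x)"
  by (simp add: BijGroup_def compose_def)

theorem free_group_residually_finite:
  assumes "reduced u" and "u \<noteq> []"
  shows "\<exists>n h. group_hom free_group_F (BijGroup {0..n::nat}) h \<and> h u \<noteq> \<one>\<^bsub>BijGroup {0..n}\<^esub>"
proof -
  define n where "n = length u"
  define S where "S = {0..n}"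
  have "\<forall>x. \<exists>\<sigma>. \<sigma> \<in> Bij S \<and> (\<forall>k < n.
    (u ! k = (x, False) \<longrightarrow> \<sigma> (Suc k) = k) \<and> (u ! k = (x, True) \<longrightarrow> \<sigma> k = Suc k))"
    using reduced_path_Bij[OF assms(1)] by (auto simp: S_def n_def)
  from choice[OF this] obtain \<sigma> where \<sigma>: "\<And>x. \<sigma> x \<in> Bij S"
    and path: "\<And>x k. k < n \<Longrightarrow> u ! k = (x, False) \<Longrightarrow> \<sigma> x (Suc k) = k"
      "\<And>x k. k < n \<Longrightarrow> u ! k = (x, True) \<Longrightarrow> \<sigma> x k = Suc k"
    by blast
  interpret BG: group "BijGroup S"
    by (rule group_BijGroup)
  have \<sigma>_closed: "\<sigma> x \<in> carrier (BijGroup S)" for x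
    using \<sigma> by (simp add: BijGroup_def)
  define h where "h = free_lift (BijGroup S) \<sigma>"
  have h_Cons: "h ((x, s) # w) p = (if s then inv_into S (\<sigma> x) else \<sigma> x) (h w p)"
    if p: "p \<in> S" for x s w p
  proof -
    have hw: "h w \<in> carrier (BijGroup S)"
      using BG.free_lift_closed[where f = \<sigma>, OF \<sigma>_closed] by (simp add: h_def)
    then have "h w p \<in> S"
      using p Bij_imp_funcset by (fastforce simp: BijGroup_def)
    then show ?thesis
      using p hw \<sigma>_closed[of x] \<sigma>[of x] BG.inv_closed[OF \<sigma>_closed[of x]]
      by (cases s) (simp_all add: h_def BijGroup_mult_apply inv_BijGroup)
  qed
  have "h (drop (n - m) u) n = n - m" if "m \<le> n" for m
    using that
  proof (induction m)
    case 0
    then show ?case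
      by (simp add: h_def BijGroup_def S_def n_def)
  next
    case (Suc m)
    define k where "k = n - Suc m"
    obtain x s where l: "u ! k = (x, s)"
      by fastforce
    have k: "k < n" "Suc k = n - m" "k \<in> S" "Suc k \<in> S"
      using Suc.prems by (auto simp: k_def S_def)
    then have "drop k u = (x, s) # drop (n - m) u"
      by (metis Cons_nth_drop_Suc l n_def)
    then have "h (drop k u) n = (if s then inv_into S (\<sigma> x) else \<sigma> x) (Suc k)"
      using Suc k by (simp add: h_Cons S_def)
    also have "\<dots> = k"
    proof (cases s)
      case True
      have "inj_on (\<sigma> x) S"
        using \<sigma>[of x] by (simp add: Bij_def bij_betw_def)
      then show ?thesis
        using True k(3) l path(2)[OF k(1)] by (simp add: inv_into_f_eq)
    qed (use l path(1)[OF k(1)] in simp)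
    finally show ?case
      by (simp add: k_def)
  qed
  from this[of n] have "h u n \<noteq> \<one>\<^bsub>BijGroup S\<^esub> n"
    using assms(2) by (simp add: n_def S_def BijGroup_def)
  show ?thesis
  proof (intro exI conjI)
    show "group_hom free_group_F (BijGroup {0..n}) h"
      using BG.free_lift_group_hom[where f = \<sigma>, OF \<sigma>_closed] by (simp add: h_def S_def)
    show "h u \<noteq> \<one>\<^bsub>BijGroup {0..n}\<^esub>"
      using \<open>h u n \<noteq> \<one>\<^bsub>BijGroup S\<^esub> n\<close> by (auto simp: S_def)
  qed
qed

section \<open>Dyck languages\<close>

fun bar :: "letter \<Rightarrow> letter" where
  "bar A = Abar" | "bar Abar = A" | "bar B = Bbar" | "bar Bbar = B"

text \<open>\<open>signed\<close> reads \<open>Abar\<close> as the inverse of \<open>A\<close> and \<open>Bbar\<close> as the inverse of \<open>B\<close>, so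
  \<open>reduce \<circ> map signed\<close> is the natural map from \<open>M\<close> to the free group on \<open>a, b\<close> inside \<open>F\<close>.\<close>
fun signed :: "letter \<Rightarrow> letter \<times> bool" where
  "signed A = (A, False)" | "signed Abar = (A, True)"
| "signed B = (B, False)" | "signed Bbar = (B, True)"

lemma signed_bar: "signed (bar x) = ginv_letter (signed x)"
  by (cases x) auto

lemma signed_eq_ginv_letter_signed: "signed y = ginv_letter (signed x) \<longleftrightarrow> y = bar x"
  by (cases x; cases y) auto

lemma del_two_sided_iff: "(u, v) \<in> del_two_sided \<longleftrightarrow> (\<exists>p q x. u = p @ [x, bar x] @ q \<and> v = p @ q)"
proof -
  have "(x, y) \<in> {(A, Abar), (Abar, A), (B, Bbar), (Bbar, B)} \<longleftrightarrow> y = bar x" for x y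
    by (cases x; cases y) auto
  then show ?thesis
    unfolding del_two_sided_def by blast
qed

lemma del_two_sided_rtrancl_context:
  "(u, v) \<in> del_two_sided\<^sup>* \<Longrightarrow> (p @ u @ q, p @ v @ q) \<in> del_two_sided\<^sup>*"
proof (induction rule: rtrancl_induct)
  case (step v w)
  then obtain p' q' x where "v = p' @ [x, bar x] @ q'" "w = p' @ q'"
    by (auto simp: del_two_sided_iff)
  then have "(p @ v @ q, p @ w @ q) \<in> del_two_sided"
    unfolding del_two_sided_iff by (intro exI[of _ "p @ p'"] exI[of _ "q' @ q"] exI[of _ x]) simp
  with step.IH show ?case
    by (rule rtrancl_into_rtrancl)
qed simp

lemma del_one_sided_rtrancl_context:
  "(u, v) \<in> del_one_sided\<^sup>* \<Longrightarrow> (p @ u @ q, p @ v @ q) \<in> del_one_sided\<^sup>*"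
proof (induction rule: rtrancl_induct)
  case (step v w)
  then obtain p' q' x y where "v = p' @ [x, y] @ q'" "w = p' @ q'"
    and xy: "(x, y) \<in> {(A, Abar), (B, Bbar)}"
    by (auto simp: del_one_sided_def)
  then have "(p @ v @ q, p @ w @ q) = ((p @ p') @ [x, y] @ (q' @ q), (p @ p') @ (q' @ q))"
    by simp
  with xy have "(p @ v @ q, p @ w @ q) \<in> del_one_sided"
    unfolding del_one_sided_def by blast
  with step.IH show ?case
    by (rule rtrancl_into_rtrancl)
qed simp

lemma dyck_one_sided_subset: "dyck_one_sided \<subseteq> dyck_two_sided"
proof -
  have "del_one_sided \<subseteq> del_two_sided"
    unfolding del_one_sided_def del_two_sided_def by blast
  then show ?thesis
    unfolding dyck_one_sided_def dyck_two_sided_def using rtrancl_mono by blast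
qed

lemma reduce_signed_del_two_sided:
  "\<exists>w'. (w, w') \<in> del_two_sided\<^sup>* \<and> reduce (map signed w) = map signed w'"
proof (induction w)
  case (Cons x w)
  then obtain w' where w': "(w, w') \<in> del_two_sided\<^sup>*" "reduce (map signed w) = map signed w'"
    by blast
  have step: "(x # w, x # w') \<in> del_two_sided\<^sup>*"
    using del_two_sided_rtrancl_context[OF w'(1), of "[x]" "[]"] by simp
  show ?case
  proof (cases "\<exists>w''. w' = bar x # w''")
    case True
    then obtain w'' where "w' = bar x # w''"
      by blast
    moreover have "(x # bar x # w'', w'') \<in> del_two_sided"
      unfolding del_two_sided_iff by (metis append_Cons append_Nil)
    ultimately show ?thesis
      using step w'(2) by (auto simp: reduce_Cons signed_bar intro: rtrancl_into_rtrancl)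
  next
    case False
    then have "reduce (map signed (x # w)) = map signed (x # w')"
      using w'(2) by (cases w') (auto simp: reduce_Cons signed_eq_ginv_letter_signed)
    with step show ?thesis
      by blast
  qed
qed simp

lemma reduce_signed_del_two_sided_step:
  assumes "(u, v) \<in> del_two_sided"
  shows "reduce (map signed u) = reduce (map signed v)"
proof -
  obtain p q x where "u = p @ [x, bar x] @ q" "v = p @ q"
    using assms by (auto simp: del_two_sided_iff)
  then show ?thesis
    by (simp add: reduce_append reduce_Cons signed_bar push_push_ginv_letter reduced_reduce)
qed

lemma dyck_two_sided_iff_reduce_signed: "w \<in> dyck_two_sided \<longleftrightarrow> reduce (map signed w) = []"
proof
  assume "w \<in> dyck_two_sided"
  then have "(w, []) \<in> del_two_sided\<^sup>*"
    by (simp add: dyck_two_sided_def)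
  then show "reduce (map signed w) = []"
    by (induction rule: converse_rtrancl_induct) (auto simp: reduce_signed_del_two_sided_step)
next
  assume "reduce (map signed w) = []"
  then show "w \<in> dyck_two_sided"
    using reduce_signed_del_two_sided[of w] by (auto simp: dyck_two_sided_def)
qed

inductive balanced :: "letter list \<Rightarrow> bool" where
  Nil: "balanced []"
| pair: "balanced u \<Longrightarrow> balanced v \<Longrightarrow> balanced (x # u @ bar x # v)"

lemma balanced_insert_pair: "balanced w \<Longrightarrow> w = u @ v \<Longrightarrow> balanced (u @ [x, bar x] @ v)"
proof (induction w arbitrary: u v rule: balanced.induct)
  case Nil
  then show ?case
    using balanced.pair[OF balanced.Nil balanced.Nil, of x] by simp
next
  case (pair w1 w2 y)
  show ?case
  proof (cases u)
    case Nil
    then show ?thesis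
      using balanced.pair[OF balanced.Nil balanced.pair[OF pair.hyps, of y], of x] pair.prems by simp
  next
    case (Cons y' u')
    with pair.prems have "y' = y" "u' @ v = w1 @ bar y # w2"
      by auto
    then obtain t where "u' = w1 @ t \<and> t @ v = bar y # w2 \<or> u' @ t = w1 \<and> v = t @ bar y # w2"
      by (auto simp: append_eq_append_conv2)
    then consider "u' @ t = w1" "v = t @ bar y # w2" | "u' = w1" "v = bar y # w2"
      | t' where "u' = w1 @ bar y # t'" "w2 = t' @ v"
      by (cases t) auto
    then show ?thesis
    proof cases
      case 1
      then show ?thesis
        using balanced.pair[OF pair.IH(1)[of u' t] pair.hyps(2), of y] \<open>u = y' # u'\<close> \<open>y' = y\<close> by simp
    next
      case 2
      then show ?thesis
        using balanced.pair[OF pair.IH(1)[of w1 "[]"] pair.hyps(2), of y] \<open>u = y' # u'\<close> \<open>y' = y\<close>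
        by simp
    next
      case 3
      then show ?thesis
        using balanced.pair[OF pair.hyps(1) pair.IH(2)[of t' v], of y] \<open>u = y' # u'\<close> \<open>y' = y\<close>
        by simp
    qed
  qed
qed

lemma dyck_two_sided_balanced: "w \<in> dyck_two_sided \<Longrightarrow> balanced w"
  unfolding dyck_two_sided_def
proof (simp, induction rule: converse_rtrancl_induct)
  case (step u v)
  then obtain p q x where "u = p @ [x, bar x] @ q" "v = p @ q"
    by (auto simp: del_two_sided_iff)
  with step show ?case
    using balanced_insert_pair[of v p q x] by simp
qed (rule balanced.Nil)

lemma dyck_one_sided_Nil: "[] \<in> dyck_one_sided"
  by (simp add: dyck_one_sided_def)

lemma dyck_one_sided_append:
  "d \<in> dyck_one_sided \<Longrightarrow> e \<in> dyck_one_sided \<Longrightarrow> d @ e \<in> dyck_one_sided"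
  unfolding dyck_one_sided_def
  using del_one_sided_rtrancl_context[of d "[]" "[]" e] by (auto intro: rtrancl_trans)

lemma dyck_one_sided_wrap:
  assumes "d \<in> dyck_one_sided" and "x \<in> {A, B}"
  shows "x # d @ [bar x] \<in> dyck_one_sided"
proof -
  have "([x] @ d @ [bar x], [x] @ [] @ [bar x]) \<in> del_one_sided\<^sup>*"
    using assms(1) del_one_sided_rtrancl_context unfolding dyck_one_sided_def by blast
  moreover have "([] @ [x, bar x] @ [], []) \<in> del_one_sided"
    using assms(2) unfolding del_one_sided_def by auto
  ultimately show ?thesis
    unfolding dyck_one_sided_def by simp
qed

lemma dyck_one_sided_concat_replicate:
  "d \<in> dyck_one_sided \<Longrightarrow> concat (replicate k d) \<in> dyck_one_sided"
  by (induction k) (simp_all add: dyck_one_sided_Nil dyck_one_sided_append)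

lemma dyck_one_sided_wrap_replicate:
  assumes "d \<in> dyck_one_sided" and "x \<in> {A, B}"
  shows "replicate k x @ d @ replicate k (bar x) \<in> dyck_one_sided"
proof (induction k)
  case (Suc k)
  have "replicate (Suc k) x @ d @ replicate (Suc k) (bar x) =
      x # (replicate k x @ d @ replicate k (bar x)) @ [bar x]"
    by (simp add: replicate_append_same)
  with dyck_one_sided_wrap[OF Suc assms(2)] show ?case
    by simp
qed (use assms(1) in simp)

lemma (in group) balanced_image_one_sided:
  assumes fin: "finite (carrier G)"
    and P_append: "\<And>u v. P (u @ v) = P u \<otimes> P v" and P_closed: "\<And>u. P u \<in> carrier G"
    and "balanced w"
  shows "\<exists>d \<in> dyck_one_sided. P d = P w"
  using \<open>balanced w\<close>
proof (induction rule: balanced.induct)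
  case Nil
  then show ?case
    using dyck_one_sided_Nil by blast
next
  case (pair w1 w2 x)
  then obtain d1 d2 where d: "d1 \<in> dyck_one_sided" "P d1 = P w1" "d2 \<in> dyck_one_sided" "P d2 = P w2"
    by blast
  define m where "m = order G - 1"
  have P_Nil: "P [] = \<one>"
    using P_append[of "[]" "[]"] P_closed by (simp add: r_cancel_one')
  have P_replicate: "P (concat (replicate k u)) = P u [^] k" for k u
  proof (induction k)
    case (Suc k)
    then have "P (concat (replicate (Suc k) u)) = P u \<otimes> P u [^] k"
      by (simp add: P_append)
    then show ?case
      using nat_pow_Suc2[OF P_closed] by simp
  qed (simp add: P_Nil)
  have "Suc m = order G"
    using fin by (simp add: m_def order_gt_0_iff_finite)
  then have "P u [^] m \<otimes> P u = \<one>" for u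
    using pow_order_eq_1[OF P_closed, of u] by (metis nat_pow_Suc)
  then have P_inv: "P (concat (replicate m u)) = inv (P u)" for u
    using inv_equality[of "P u [^] m" "P u"] by (simp add: P_replicate P_closed)
  have P_inv_letter: "P (replicate m y) = inv (P [y])" for y
    using P_inv[of "[y]"] by simp
  have P_Cons: "P (y # u) = P [y] \<otimes> P u" for y u
    using P_append[of "[y]" u] by simp
  have P_pair: "P (y # u @ bar y # v) = P [y] \<otimes> P u \<otimes> P [bar y] \<otimes> P v" for y u v
    by (simp add: P_Cons[of y "u @ bar y # v"] P_append[of u] P_Cons[of "bar y" v] m_assoc P_closed)
  show ?case
  proof (cases "x \<in> {A, B}")
    case True
    then have "x # d1 @ bar x # d2 \<in> dyck_one_sided"
      using dyck_one_sided_append[OF dyck_one_sided_wrap[OF d(1)] d(3)] by simp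
    then show ?thesis
      by (rule bexI[rotated]) (simp add: P_pair d)
  next
    case False
    define y where "y = bar x"
    have y: "y \<in> {A, B}" "bar y = x"
      using False by (cases x; simp add: y_def)+
    txt \<open>Since \<open>inv g = g [^] m\<close>, the image of \<open>(y\<^sup>m d1\<^sup>m x\<^sup>m)\<^sup>m\<close> is that of \<open>x d1 y\<close>.\<close>
    let ?d = "concat (replicate m (replicate m y @ concat (replicate m d1) @ replicate m x)) @ d2"
    have "?d \<in> dyck_one_sided"
      using dyck_one_sided_wrap_replicate[OF dyck_one_sided_concat_replicate[OF d(1)] y(1)] y(2) d(3)
      by (simp add: dyck_one_sided_concat_replicate dyck_one_sided_append)
    moreover have "P ?d = P [x] \<otimes> P d1 \<otimes> P [y] \<otimes> P d2"
      by (simp add: P_append P_inv P_inv_letter P_closed inv_mult_group m_assoc)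
    ultimately show ?thesis
      by (intro bexI[of _ ?d]) (simp_all add: P_pair d y_def)
  qed
qed

section \<open>The closure of the one-sided Dyck language\<close>

lemma dyck_two_sided_separation:
  assumes "w \<notin> dyck_two_sided"
  shows "\<exists>n h. group_hom free_group_F (BijGroup {0..n::nat}) h \<and>
    h (emb w) \<noteq> \<one>\<^bsub>BijGroup {0..n}\<^esub> \<and> (\<forall>d \<in> dyck_two_sided. h (emb d) = \<one>\<^bsub>BijGroup {0..n}\<^esub>)"
proof -
  obtain n h0 where h0: "group_hom free_group_F (BijGroup {0..n::nat}) h0"
    and nontrivial: "h0 (reduce (map signed w)) \<noteq> \<one>\<^bsub>BijGroup {0..n}\<^esub>"
    using free_group_residually_finite[OF reduced_reduce] assms dyck_two_sided_iff_reduce_signed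
    by blast
  interpret h0: group_hom free_group_F "BijGroup {0..n}" h0
    by (rule h0)
  define h where "h = free_lift (BijGroup {0..n}) (\<lambda>x. h0 [signed x])"
  have letters: "[signed x] \<in> carrier free_group_F" for x
    by (simp add: carrier_free_group_F reduced_def)
  then have letter_images: "h0 [signed x] \<in> carrier (BijGroup {0..n})" for x
    by simp
  have h_emb: "h (emb v) = h0 (reduce (map signed v))" for v
  proof (induction v)
    case (Cons x v)
    have "h (emb (x # v)) = h0 ([signed x] \<otimes>\<^bsub>free_group_F\<^esub> reduce (map signed v))"
      using Cons letters by (simp add: h_def emb_def carrier_free_group_F reduced_reduce)
    then show ?case
      by (simp add: mult_free_group_F reduce_Cons reduce_reduced reduced_reduce)
  qed (use h0.hom_one in \<open>simp add: h_def emb_def one_free_group_F\<close>)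
  show ?thesis
  proof (intro exI conjI ballI)
    show "group_hom free_group_F (BijGroup {0..n}) h"
      unfolding h_def by (rule h0.H.free_lift_group_hom[OF letter_images])
    show "h (emb w) \<noteq> \<one>\<^bsub>BijGroup {0..n}\<^esub>"
      using nontrivial by (simp add: h_emb)
    fix d assume "d \<in> dyck_two_sided"
    then show "h (emb d) = \<one>\<^bsub>BijGroup {0..n}\<^esub>"
      using h0.hom_one by (simp add: h_emb dyck_two_sided_iff_reduce_signed one_free_group_F)
  qed
qed

lemma emb_in_closure_imp_dyck_two_sided:
  assumes "emb w \<in> profinite_topology free_group_F closure_of (emb ` dyck_one_sided)"
  shows "w \<in> dyck_two_sided"
proof (rule ccontr)
  assume "w \<notin> dyck_two_sided"
  then obtain n h where h: "group_hom free_group_F (BijGroup {0..n::nat}) h"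
    "h (emb w) \<noteq> \<one>\<^bsub>BijGroup {0..n}\<^esub>" "\<forall>d \<in> dyck_two_sided. h (emb d) = \<one>\<^bsub>BijGroup {0..n}\<^esub>"
    by (blast dest: dyck_two_sided_separation)
  then obtain d where "d \<in> dyck_one_sided" "h (emb d) = h (emb w)"
    using group.profinite_closure_hom_image[OF group_free_group_F assms h(1) finite_carrier_BijGroup]
    by auto
  then show False
    using h dyck_one_sided_subset by auto
qed

lemma dyck_two_sided_in_closure:
  assumes "w \<in> dyck_two_sided"
  shows "emb w \<in> profinite_topology free_group_F closure_of (emb ` dyck_one_sided)"
proof (rule group.in_profinite_closureI[OF group_free_group_F])
  fix H :: "(gword set \<Rightarrow> gword set) monoid" and h
  assume hom: "group_hom free_group_F H h" and fin: "finite (carrier H)"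
  interpret group_hom free_group_F H h
    by (rule hom)
  obtain d where "d \<in> dyck_one_sided" "h (emb d) = h (emb w)"
    using H.balanced_image_one_sided[OF fin, of "h \<circ> emb"] dyck_two_sided_balanced[OF assms]
    by (auto simp: emb_append emb_in_carrier)
  then show "\<exists>s \<in> emb ` dyck_one_sided. h s = h (emb w)"
    by blast
qed (auto simp: emb_in_carrier)

theorem theorem1:
  shows "topM closure_of (emb ` dyck_one_sided) = emb ` dyck_two_sided"
proof -
  have "topM closure_of (emb ` dyck_one_sided) =
      range emb \<inter> profinite_topology free_group_F closure_of (emb ` dyck_one_sided)"
    unfolding topM_def profinite_F_eq by (rule closure_of_subtopology_open) blast
  then show ?thesis
    using emb_in_closure_imp_dyck_two_sided dyck_two_sided_in_closure by auto
qed

end
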